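(* For $j\in\{1,\dots,n\}$, let $X_j\subset\mathbb{R}$ be a union of finitely many disjoint closed intervals (rays allowed) and let $g^{\mathrm{in}}_j:X_j\to\mathbb{R}$ be a piecewise $\chi$ function. Then $\star\{(g^{\mathrm{in}}_j,X_j)\}_{j=1}^n$ is a piecewise $\chi$ function.
   Context: For $\tau=(\tau_1,\tau_2)\in\mathbb{R}^2$, $\chi_\tau:\mathbb{R}\to\mathbb{R}$ is $\chi_\tau(x)=x-\tau_1+\tau_2$ for $x\le\tau_1$ and $\chi_\tau(x)=-x+\tau_1+\tau_2$ for $x>\tau_1$; $\tau$ is its top point. A function $g:X\to\mathbb{R}$, $X\subseteq\mathbb{R}$, is a piecewise $\chi$ function if $X$ is a union of disjoint intervals and on each of these intervals $g$ equals the restriction of some $\chi_\tau$. The operator $\star$: given functions $g^{\mathrm{in}}_j:X_j\to\mathbb{R}$, $j=1,\dots,n$, it returns $g^{\mathrm{out}}=\star\{(g^{\mathrm{in}}_j,X_j)\}_{j=1}^n$ with domain the Minkowski sum $\sum_{j=1}^nX_j$, defined by $g^{\mathrm{out}}(z)=\max\{\sum_{j=1}^ng^{\mathrm{in}}_j(x_j): x\in\mathbb{R}^n,\ \sum_jx_j=z,\ x_j\in X_j\ \forall j\}$. *)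

theory Defs
  imports "HOL-Analysis.Analysis"
begin

definition chi :: "real \<times> real \<Rightarrow> real \<Rightarrow> real" where
  "chi \<tau> x = (if x \<le> fst \<tau> then x - fst \<tau> + snd \<tau> else - x + fst \<tau> + snd \<tau>)"

text \<open>A function g on domain X (values outside X are irrelevant) is piecewise chi:
  X is the union of finitely many pairwise disjoint intervals, and on each of
  them g agrees with some chi function.\<close>
definition piecewise_chi :: "(real \<Rightarrow> real) \<Rightarrow> real set \<Rightarrow> bool" where
  "piecewise_chi g X \<longleftrightarrow>
     (\<exists>\<I>. finite \<I> \<and> pairwise disjnt \<I> \<and> \<Union>\<I> = X \<and>
          (\<forall>J\<in>\<I>. is_interval J \<and> (\<exists>\<tau>. \<forall>x\<in>J. g x = chi \<tau> x)))"

definition finite_closed_interval_union :: "real set \<Rightarrow> bool" where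
  "finite_closed_interval_union X \<longleftrightarrow>
     (\<exists>\<I>. finite \<I> \<and> pairwise disjnt \<I> \<and> \<Union>\<I> = X \<and>
          (\<forall>J\<in>\<I>. is_interval J \<and> closed J))"

definition minkowski_sum :: "(nat \<Rightarrow> real set) \<Rightarrow> nat \<Rightarrow> real set" where
  "minkowski_sum X n = {z. \<exists>x. (\<forall>j\<in>{1..n}. x j \<in> X j) \<and> (\<Sum>j=1..n. x j) = z}"

text \<open>The star operator (the max is rendered as the supremum; it equals the max
  whenever the max exists).\<close>
definition star :: "(nat \<Rightarrow> real \<Rightarrow> real) \<Rightarrow> (nat \<Rightarrow> real set) \<Rightarrow> nat \<Rightarrow> real \<Rightarrow> real" where
  "star g X n z = Sup {(\<Sum>j=1..n. g j (x j)) | x. (\<forall>j\<in>{1..n}. x j \<in> X j) \<and> (\<Sum>j=1..n. x j) = z}"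

end

theory Submission
  imports Defs
begin

text \<open>Decompose each \<open>X\<^sub>j\<close> into intervals on which \<open>g\<^sub>j\<close> is a single \<open>\<chi>\<close> function. For one
  choice of a piece \<open>J\<^sub>j\<close> per coordinate, with \<open>\<chi>\<^sub>j\<close> the corresponding function, let \<open>c\<^sub>j\<close> be the
  point of the closure of \<open>J\<^sub>j\<close> nearest to the top point of \<open>\<chi>\<^sub>j\<close>. Then
  \<open>\<Sum> \<chi>\<^sub>j(x\<^sub>j) = h - \<Sum> \<bar>x\<^sub>j - c\<^sub>j\<bar>\<close> on the box, and the supremum of this over \<open>\<Sum> x\<^sub>j = z\<close>
  is \<open>h - \<bar>z - \<Sum> c\<^sub>j\<bar>\<close>: the restricted star is one \<open>\<chi>\<close> function on the interval
  \<open>\<Sum> J\<^sub>j\<close>. The full star is the maximum over the finitely many choices, and an upper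
  envelope of finitely many \<open>\<chi>\<close> functions on intervals is piecewise \<open>\<chi>\<close>, because the
  difference of two \<open>\<chi>\<close> functions is monotone, so each function is maximal on a finite
  union of intervals.\<close>

lemma interval_convex_combination:
  fixes J :: "real set"
  assumes "is_interval J" "a \<in> J" "b \<in> J" "0 \<le> t" "t \<le> 1"
  shows "a + t * (b - a) \<in> J"
proof -
  have "(1 - t) *\<^sub>R a + t *\<^sub>R b \<in> J"
    using assms by (intro convexD_alt) (auto simp: is_interval_convex_1)
  then show ?thesis by (simp add: algebra_simps)
qed

lemma Compl_interval_eq:
  fixes I :: "real set"
  assumes "is_interval I"
  shows "- I = {x. \<forall>d\<in>I. x < d} \<union> {x. \<forall>d\<in>I. d < x}"
proof (intro set_eqI iffI)
  fix x assume "x \<in> - I"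
  then have "\<not> ((\<exists>d\<in>I. d \<le> x) \<and> (\<exists>d\<in>I. x \<le> d))"
    using assms unfolding is_interval_1 by blast
  then show "x \<in> {x. \<forall>d\<in>I. x < d} \<union> {x. \<forall>d\<in>I. d < x}"
    by (auto simp: not_le)
qed auto

lemma is_interval_strict_lower_bounds: "is_interval {x::real. \<forall>d\<in>I. x < d}"
  unfolding is_interval_1 by (blast intro: le_less_trans)

lemma is_interval_strict_upper_bounds: "is_interval {x::real. \<forall>d\<in>I. d < x}"
  unfolding is_interval_1 by (blast intro: less_le_trans)

lemma pairwise_disjnt_insert_cuts:
  assumes "pairwise disjnt \<P>" "L \<inter> I = {}" "R \<inter> I = {}" "L = R \<or> L \<inter> R = {}"
  shows "pairwise disjnt (insert I ((\<lambda>p. p \<inter> L) ` \<P> \<union> (\<lambda>p. p \<inter> R) ` \<P>))"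
proof -
  have cut_form: "\<exists>p\<in>\<P>. \<exists>S\<in>{L, R}. C = p \<inter> S"
    if "C \<in> insert I ((\<lambda>p. p \<inter> L) ` \<P> \<union> (\<lambda>p. p \<inter> R) ` \<P>)" "C \<noteq> I" for C
    using that by blast
  have cut_off_I: "C \<inter> I = {}"
    if "C \<in> insert I ((\<lambda>p. p \<inter> L) ` \<P> \<union> (\<lambda>p. p \<inter> R) ` \<P>)" "C \<noteq> I" for C
    using cut_form[OF that] assms(2,3) by blast
  have cuts_disjoint: "A \<inter> B = {}"
    if "p \<in> \<P>" "q \<in> \<P>" "S \<in> {L, R}" "S' \<in> {L, R}" "A = p \<inter> S" "B = q \<inter> S'" "A \<noteq> B"
    for A B p q S S'
  proof (cases "p = q")
    case True
    then have "S \<noteq> S'" using that by blast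
    then have "S \<inter> S' = {}" using assms(4) that(3,4) by auto
    then show ?thesis using that(5,6) by blast
  next
    case False
    then show ?thesis using assms(1) that unfolding pairwise_def disjnt_def by blast
  qed
  show ?thesis
  proof (unfold pairwise_def disjnt_def, intro ballI impI)
    fix A B assume A: "A \<in> insert I ((\<lambda>p. p \<inter> L) ` \<P> \<union> (\<lambda>p. p \<inter> R) ` \<P>)"
      and B: "B \<in> insert I ((\<lambda>p. p \<inter> L) ` \<P> \<union> (\<lambda>p. p \<inter> R) ` \<P>)" and "A \<noteq> B"
    show "A \<inter> B = {}"
    proof (cases "A = I \<or> B = I")
      case True
      then show ?thesis using \<open>A \<noteq> B\<close> cut_off_I[OF A] cut_off_I[OF B] by blast
    next
      case False
      then obtain p q S S' where "p \<in> \<P>" "q \<in> \<P>" "S \<in> {L, R}" "S' \<in> {L, R}" "A = p \<inter> S" "B = q \<inter> S'"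
        using cut_form[OF A] cut_form[OF B] by blast
      then show ?thesis using cuts_disjoint \<open>A \<noteq> B\<close> by blast
    qed
  qed
qed

lemma finite_intervals_disjoint_refinement:
  fixes \<F> :: "real set set"
  assumes "finite \<F>" "\<forall>I\<in>\<F>. is_interval I"
  shows "\<exists>\<P>. finite \<P> \<and> pairwise disjnt \<P> \<and> (\<forall>p\<in>\<P>. is_interval p) \<and>
    \<Union>\<P> = \<Union>\<F> \<and> (\<forall>p\<in>\<P>. \<exists>I\<in>\<F>. p \<subseteq> I)"
  using assms
proof (induction \<F> rule: finite_induct)
  case empty
  show ?case by (intro exI[of _ "{}"]) auto
next
  case (insert I \<F>)
  then obtain \<P> where \<P>: "finite \<P>" "pairwise disjnt \<P>" "\<forall>p\<in>\<P>. is_interval p"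
    "\<Union>\<P> = \<Union>\<F>" "\<forall>p\<in>\<P>. \<exists>I\<in>\<F>. p \<subseteq> I"
    by auto
  define L where "L = {x. \<forall>d\<in>I. x < d}"
  define R where "R = {x. \<forall>d\<in>I. d < x}"
  define \<P>' where "\<P>' = insert I ((\<lambda>p. p \<inter> L) ` \<P> \<union> (\<lambda>p. p \<inter> R) ` \<P>)"
  have I: "is_interval I" using insert.prems by simp
  have "L = R" if "I = {}" unfolding L_def R_def using that by simp
  moreover have "L \<inter> R = {}" if "I \<noteq> {}" unfolding L_def R_def using that by force
  ultimately have LR: "- I = L \<union> R" "L = R \<or> L \<inter> R = {}"
    unfolding L_def R_def using Compl_interval_eq[OF I] by blast+
  have LR_intervals: "is_interval L" "is_interval R"
    unfolding L_def R_def by (rule is_interval_strict_lower_bounds is_interval_strict_upper_bounds)+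
  have "finite \<P>'" unfolding \<P>'_def using \<P>(1) by simp
  moreover have "pairwise disjnt \<P>'"
    unfolding \<P>'_def using LR by (intro pairwise_disjnt_insert_cuts \<P>(2)) auto
  moreover have "\<forall>p\<in>\<P>'. is_interval p"
    unfolding \<P>'_def using I \<P>(3) LR_intervals is_interval_Int by auto
  moreover have "\<Union>\<P>' = \<Union>(insert I \<F>)"
  proof -
    have "\<Union>\<P>' = I \<union> (\<Union>\<P> \<inter> L \<union> \<Union>\<P> \<inter> R)" unfolding \<P>'_def by auto
    also have "\<dots> = I \<union> \<Union>\<P> \<inter> - I" unfolding LR(1) by auto
    finally show ?thesis by (simp add: \<P>(4) Un_Int_distrib)
  qed
  moreover have "\<forall>C\<in>\<P>'. \<exists>J\<in>insert I \<F>. C \<subseteq> J"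
  proof
    fix C assume "C \<in> \<P>'"
    then consider "C = I" | p S where "p \<in> \<P>" "C = p \<inter> S" unfolding \<P>'_def by blast
    then show "\<exists>J\<in>insert I \<F>. C \<subseteq> J"
    proof cases
      case (2 p S)
      then obtain J where "J \<in> \<F>" "p \<subseteq> J" using \<P>(5) by blast
      then show ?thesis using 2(2) by blast
    qed simp
  qed
  ultimately show ?case by blast
qed

lemma piecewise_chi_of_finite_cover:
  assumes "finite \<F>" "\<forall>I\<in>\<F>. is_interval I \<and> (\<exists>\<tau>. \<forall>x\<in>I. g x = chi \<tau> x)" "\<Union>\<F> = X"
  shows "piecewise_chi g X"
proof -
  have "\<forall>I\<in>\<F>. is_interval I" using assms(2) by simp
  from finite_intervals_disjoint_refinement[OF assms(1) this] obtain \<P> where \<P>: "finite \<P>" "pairwise disjnt \<P>" "\<forall>p\<in>\<P>. is_interval p" "\<Union>\<P> = \<Union>\<F>"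
    "\<forall>p\<in>\<P>. \<exists>I\<in>\<F>. p \<subseteq> I"
    by blast
  have "\<exists>\<tau>. \<forall>x\<in>p. g x = chi \<tau> x" if p: "p \<in> \<P>" for p
  proof -
    obtain I where I: "I \<in> \<F>" "p \<subseteq> I" using \<P>(5) p by blast
    then obtain \<tau> where "\<forall>x\<in>I. g x = chi \<tau> x" using assms(2) by blast
    then show ?thesis using I(2) by blast
  qed
  then show ?thesis
    unfolding piecewise_chi_def using \<P>(1-4) assms(3) by (intro exI[of _ \<P>]) simp
qed

lemma piecewise_chi_cong:
  assumes "piecewise_chi f X" "\<And>x. x \<in> X \<Longrightarrow> f x = h x"
  shows "piecewise_chi h X"
  using assms unfolding piecewise_chi_def by (metis UnionI)

lemma chi_eq_abs: "chi \<tau> x = snd \<tau> - \<bar>x - fst \<tau>\<bar>"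
  unfolding chi_def by auto

lemma is_interval_chi_le: "is_interval {z. chi \<sigma> z \<le> chi \<tau> z}"
proof -
  \<comment> \<open>\<open>chi \<sigma> - chi \<tau>\<close> is monotone: non-decreasing if \<open>fst \<sigma> \<le> fst \<tau>\<close>, non-increasing otherwise.\<close>
  have "chi \<sigma> x \<le> chi \<tau> x" if "a \<le> x" "x \<le> b" "chi \<sigma> a \<le> chi \<tau> a" "chi \<sigma> b \<le> chi \<tau> b" for a b x
    using that unfolding chi_eq_abs by (cases "fst \<sigma> \<le> fst \<tau>") (simp_all add: abs_if split: if_splits)
  then show ?thesis unfolding is_interval_1 by blast
qed

lemma finite_union_of_intervals_Int:
  fixes S T :: "real set"
  assumes "(finite union_of is_interval) S" "(finite union_of is_interval) T"
  shows "(finite union_of is_interval) (S \<inter> T)"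
  using assms finite_union_of_Int_eq[of is_interval] finite_union_of_inc is_interval_Int by blast

lemma finite_union_of_intervals_INT:
  fixes B :: "'a \<Rightarrow> real set"
  assumes "finite K" "\<And>k. k \<in> K \<Longrightarrow> (finite union_of is_interval) (B k)"
  shows "(finite union_of is_interval) (\<Inter>k\<in>K. B k)"
  using assms
proof (induction K rule: finite_induct)
  case empty
  then show ?case by (simp add: finite_union_of_inc)
next
  case (insert k K)
  then show ?case by (simp add: finite_union_of_intervals_Int)
qed

lemma finite_union_of_intervals_Compl:
  fixes I :: "real set"
  assumes "is_interval I"
  shows "(finite union_of is_interval) (- I)"
  unfolding Compl_interval_eq[OF assms]
  by (intro finite_union_of_Un finite_union_of_inc is_interval_strict_lower_bounds is_interval_strict_upper_bounds)

lemma finite_union_of_intervals_chi_maximal: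
  assumes "finite K" "\<And>k. k \<in> K \<Longrightarrow> is_interval (D k)" "k \<in> K"
  shows "(finite union_of is_interval) {z \<in> D k. \<forall>l\<in>K. z \<in> D l \<longrightarrow> chi (T l) z \<le> chi (T k) z}"
proof -
  have "{z \<in> D k. \<forall>l\<in>K. z \<in> D l \<longrightarrow> chi (T l) z \<le> chi (T k) z} =
      D k \<inter> (\<Inter>l\<in>K. {z. chi (T l) z \<le> chi (T k) z} \<union> - D l)"
    by auto
  then show ?thesis
    using assms by (simp only:) (intro finite_union_of_intervals_Int finite_union_of_intervals_INT
        finite_union_of_Un finite_union_of_intervals_Compl finite_union_of_inc is_interval_chi_le; simp)
qed

lemma piecewise_chi_Max:
  assumes "finite K" "\<And>k. k \<in> K \<Longrightarrow> is_interval (D k)"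
  shows "piecewise_chi (\<lambda>z. Max ((\<lambda>k. chi (T k) z) ` {k\<in>K. z \<in> D k})) (\<Union>k\<in>K. D k)"
proof -
  let ?M = "\<lambda>z. Max ((\<lambda>k. chi (T k) z) ` {k\<in>K. z \<in> D k})"
  define A where "A k = {z \<in> D k. \<forall>l\<in>K. z \<in> D l \<longrightarrow> chi (T l) z \<le> chi (T k) z}" for k
  have "(finite union_of is_interval) (A k)" if "k \<in> K" for k
    unfolding A_def by (rule finite_union_of_intervals_chi_maximal[OF assms that])
  then obtain \<F> where \<F>: "\<And>k. k \<in> K \<Longrightarrow> finite (\<F> k)" "\<And>k. k \<in> K \<Longrightarrow> \<forall>I\<in>\<F> k. is_interval I"
    "\<And>k. k \<in> K \<Longrightarrow> \<Union>(\<F> k) = A k"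
    unfolding union_of_def by (metis mem_Collect_eq subset_eq)
  have Max_on_A: "?M z = chi (T k) z" if "k \<in> K" "z \<in> A k" for k z
    using that assms(1) unfolding A_def by (intro Max_eqI) auto
  have "(\<Union>k\<in>K. A k) = (\<Union>k\<in>K. D k)"
  proof (intro equalityI subsetI)
    fix z assume "z \<in> (\<Union>k\<in>K. D k)"
    then have fin: "finite ((\<lambda>k. chi (T k) z) ` {k\<in>K. z \<in> D k})" "(\<lambda>k. chi (T k) z) ` {k\<in>K. z \<in> D k} \<noteq> {}"
      using assms(1) by auto
    from Max_in[OF this] obtain k where "k \<in> K" "z \<in> D k" "chi (T k) z = ?M z"
      by auto
    moreover from Max_ge[OF fin(1)] have "\<forall>l\<in>K. z \<in> D l \<longrightarrow> chi (T l) z \<le> ?M z"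
      by blast
    ultimately show "z \<in> (\<Union>k\<in>K. A k)" unfolding A_def by auto
  qed (auto simp: A_def)
  moreover have "\<Union>(\<Union>k\<in>K. \<F> k) = (\<Union>k\<in>K. \<Union>(\<F> k))" by blast
  moreover have "\<dots> = (\<Union>k\<in>K. A k)" using \<F>(3) by simp
  ultimately have cover: "\<Union>(\<Union>k\<in>K. \<F> k) = (\<Union>k\<in>K. D k)" by simp
  have pieces: "is_interval I \<and> (\<exists>\<tau>. \<forall>x\<in>I. ?M x = chi \<tau> x)" if "I \<in> (\<Union>k\<in>K. \<F> k)" for I
  proof -
    from that obtain k where k: "k \<in> K" "I \<in> \<F> k" by blast
    then have "\<forall>x\<in>I. ?M x = chi (T k) x" using \<F>(3) Max_on_A by blast
    then show ?thesis using \<F>(2) k by blast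
  qed
  show ?thesis
    using \<F>(1) assms(1) pieces cover by (intro piecewise_chi_of_finite_cover[of "\<Union>k\<in>K. \<F> k"]) auto
qed

lemma is_interval_minkowski_sum:
  assumes "\<And>j. j \<in> {1..n} \<Longrightarrow> is_interval (J j)"
  shows "is_interval (minkowski_sum J n)"
  unfolding is_interval_1
proof (intro ballI allI impI)
  fix a b z assume "a \<in> minkowski_sum J n" "b \<in> minkowski_sum J n" and z: "a \<le> z \<and> z \<le> b"
  then obtain x w where x: "\<forall>j\<in>{1..n}. x j \<in> J j" "(\<Sum>j=1..n. x j) = a"
    and w: "\<forall>j\<in>{1..n}. w j \<in> J j" "(\<Sum>j=1..n. w j) = b"
    unfolding minkowski_sum_def by auto
  show "z \<in> minkowski_sum J n"
  proof (cases "a = b")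
    case True
    then show ?thesis using \<open>a \<in> minkowski_sum J n\<close> z by auto
  next
    case False
    define t where "t = (z - a) / (b - a)"
    have "0 \<le> t" "t \<le> 1" "a + t * (b - a) = z"
      unfolding t_def using False z by (auto simp: field_simps)
    moreover have "(\<Sum>j=1..n. x j + t * (w j - x j)) = a + t * (b - a)"
      using x w by (simp add: sum.distrib sum_distrib_left[symmetric] sum_subtractf)
    ultimately show ?thesis
      unfolding minkowski_sum_def using interval_convex_combination assms x(1) w(1)
      by (intro CollectI exI[of _ "\<lambda>j. x j + t * (w j - x j)"]) auto
  qed
qed

lemma sum_abs_diff_same_sign:
  fixes m y :: "'a \<Rightarrow> real"
  assumes "(\<forall>j\<in>S. y j \<le> m j) \<or> (\<forall>j\<in>S. m j \<le> y j)"
  shows "(\<Sum>j\<in>S. \<bar>m j - y j\<bar>) = \<bar>sum m S - sum y S\<bar>"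
  using assms
proof
  assume le: "\<forall>j\<in>S. y j \<le> m j"
  then have "(\<Sum>j\<in>S. \<bar>m j - y j\<bar>) = sum m S - sum y S"
    by (simp add: sum_subtractf[symmetric])
  moreover have "sum y S \<le> sum m S" using le by (intro sum_mono) auto
  ultimately show ?thesis by simp
next
  assume ge: "\<forall>j\<in>S. m j \<le> y j"
  then have "(\<Sum>j\<in>S. \<bar>m j - y j\<bar>) = sum y S - sum m S"
    by (simp add: sum_subtractf[symmetric] abs_minus_commute)
  moreover have "sum m S \<le> sum y S" using ge by (intro sum_mono) auto
  ultimately show ?thesis by simp
qed

text \<open>All coordinates of \<open>y\<close> are moved in the same direction (towards \<open>max y w\<close> or \<open>min y w\<close>
  for some \<open>w\<close> in the box with sum \<open>z\<close>), so the \<open>\<ell>\<^sub>1\<close>-cost is exactly the change of the sum.\<close>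
lemma minkowski_sum_move_to:
  assumes "\<And>j. j \<in> {1..n} \<Longrightarrow> is_interval (J j)" "\<forall>j\<in>{1..n}. y j \<in> J j"
    and "z \<in> minkowski_sum J n"
  obtains x where "\<forall>j\<in>{1..n}. x j \<in> J j" "(\<Sum>j=1..n. x j) = z"
    "(\<Sum>j=1..n. \<bar>x j - y j\<bar>) = \<bar>z - (\<Sum>j=1..n. y j)\<bar>"
proof -
  obtain w where w: "\<forall>j\<in>{1..n}. w j \<in> J j" "(\<Sum>j=1..n. w j) = z"
    using assms(3) unfolding minkowski_sum_def by auto
  define Y where "Y = (\<Sum>j=1..n. y j)"
  define m where "m j = (if Y \<le> z then max (y j) (w j) else min (y j) (w j))" for j
  define M where "M = (\<Sum>j=1..n. m j)"
  have m: "\<forall>j\<in>{1..n}. m j \<in> J j" unfolding m_def using assms(2) w(1) by (auto simp: max_def min_def)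
  have "(\<forall>j. y j \<le> m j) \<or> (\<forall>j. m j \<le> y j)" unfolding m_def by auto
  then have same_sign: "(\<Sum>j=1..n. \<bar>m j - y j\<bar>) = \<bar>M - Y\<bar>"
    unfolding M_def Y_def by (intro sum_abs_diff_same_sign) auto
  have between: "Y \<le> z \<and> z \<le> M \<or> M \<le> z \<and> z \<le> Y"
  proof -
    have "Y \<le> z \<Longrightarrow> z \<le> M" "\<not> Y \<le> z \<Longrightarrow> M \<le> z"
      unfolding M_def m_def w(2)[symmetric] by (auto intro!: sum_mono)
    then show ?thesis by linarith
  qed
  show ?thesis
  proof (cases "M = Y")
    case True
    then show ?thesis using that[of y] assms(2) between unfolding Y_def by auto
  next
    case False
    define t where "t = (z - Y) / (M - Y)"
    have t: "0 \<le> t" "t \<le> 1" "t * (M - Y) = z - Y"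
      unfolding t_def using False between by (auto simp: field_simps)
    define x where "x j = y j + t * (m j - y j)" for j
    have "\<forall>j\<in>{1..n}. x j \<in> J j" unfolding x_def using interval_convex_combination assms(1,2) m t by auto
    moreover have "(\<Sum>j=1..n. x j) = z"
      unfolding x_def using t(3) by (simp add: Y_def M_def sum.distrib sum_distrib_left[symmetric] sum_subtractf)
    moreover have "(\<Sum>j=1..n. \<bar>x j - y j\<bar>) = \<bar>z - (\<Sum>j=1..n. y j)\<bar>"
    proof -
      have "(\<Sum>j=1..n. \<bar>x j - y j\<bar>) = t * (\<Sum>j=1..n. \<bar>m j - y j\<bar>)"
        unfolding x_def using t(1) by (simp add: abs_mult sum_distrib_left)
      also have "\<dots> = \<bar>t * (M - Y)\<bar>" using same_sign t(1) by (simp add: abs_mult)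
      finally show ?thesis using t(3) unfolding Y_def by simp
    qed
    ultimately show ?thesis by (rule that)
  qed
qed

lemma interval_closure_point_between:
  fixes J :: "real set"
  assumes "is_interval J" "J \<noteq> {}"
  obtains c where "c \<in> closure J" "\<And>y. y \<in> J \<Longrightarrow> \<bar>y - a\<bar> = \<bar>y - c\<bar> + \<bar>c - a\<bar>"
proof -
  consider "\<forall>y\<in>J. y \<le> a" | "\<forall>y\<in>J. a \<le> y" | "a \<in> J"
    using assms(1) unfolding is_interval_1 by (meson linear)
  then show ?thesis
  proof cases
    case 1
    then have "bdd_above J" by (auto simp: bdd_above_def)
    moreover have "y \<le> Sup J" "Sup J \<le> a" if "y \<in> J" for y
      using 1 that assms(2) \<open>bdd_above J\<close> by (auto intro: cSup_upper cSup_least)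
    ultimately show ?thesis
      using assms(2) by (intro that[of "Sup J"] closure_contains_Sup) force+
  next
    case 2
    then have "bdd_below J" by (auto simp: bdd_below_def)
    moreover have "Inf J \<le> y" "a \<le> Inf J" if "y \<in> J" for y
      using 2 that assms(2) \<open>bdd_below J\<close> by (auto intro: cInf_lower cInf_greatest)
    ultimately show ?thesis
      using assms(2) by (intro that[of "Inf J"] closure_contains_Inf) force+
  next
    case 3
    then show ?thesis by (intro that[of a] closure_subset[THEN subsetD]) auto
  qed
qed

lemma minkowski_sum_approach_closure:
  assumes "\<And>j. j \<in> {1..n} \<Longrightarrow> is_interval (J j)" "\<forall>j\<in>{1..n}. c j \<in> closure (J j)"
    and "z \<in> minkowski_sum J n" "e > 0"
  obtains x where "\<forall>j\<in>{1..n}. x j \<in> J j" "(\<Sum>j=1..n. x j) = z"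
    "(\<Sum>j=1..n. \<bar>x j - c j\<bar>) \<le> \<bar>z - (\<Sum>j=1..n. c j)\<bar> + e"
proof -
  define d where "d = e / (2 * (real n + 1))"
  have "d > 0" unfolding d_def using assms(4) by simp
  then have "\<forall>j\<in>{1..n}. \<exists>y\<in>J j. \<bar>y - c j\<bar> < d"
    using assms(2) unfolding closure_approachable dist_real_def by blast
  then obtain y where y: "\<forall>j\<in>{1..n}. y j \<in> J j" "\<forall>j\<in>{1..n}. \<bar>y j - c j\<bar> < d"
    by metis
  obtain x where x: "\<forall>j\<in>{1..n}. x j \<in> J j" "(\<Sum>j=1..n. x j) = z"
    "(\<Sum>j=1..n. \<bar>x j - y j\<bar>) = \<bar>z - (\<Sum>j=1..n. y j)\<bar>"
    using minkowski_sum_move_to[OF assms(1) y(1) assms(3)] by blast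
  define E where "E = (\<Sum>j=1..n. \<bar>y j - c j\<bar>)"
  have "E \<le> real n * d"
    unfolding E_def using sum_mono[of "{1..n}" "\<lambda>j. \<bar>y j - c j\<bar>" "\<lambda>_. d"] y(2) by fastforce
  also have "\<dots> \<le> e / 2" unfolding d_def using assms(4) by (simp add: field_simps)
  finally have E: "E \<le> e / 2" .
  have "\<bar>(\<Sum>j=1..n. y j) - (\<Sum>j=1..n. c j)\<bar> \<le> E"
    unfolding E_def sum_subtractf[symmetric] by (rule sum_abs)
  then have "\<bar>z - (\<Sum>j=1..n. y j)\<bar> \<le> \<bar>z - (\<Sum>j=1..n. c j)\<bar> + E" by linarith
  moreover have "(\<Sum>j=1..n. \<bar>x j - c j\<bar>) \<le> (\<Sum>j=1..n. \<bar>x j - y j\<bar>) + E"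
    unfolding E_def sum.distrib[symmetric] by (intro sum_mono) simp
  ultimately show ?thesis using that x(1,2) x(3) E by fastforce
qed

definition star_sums :: "(nat \<Rightarrow> real \<Rightarrow> real) \<Rightarrow> (nat \<Rightarrow> real set) \<Rightarrow> nat \<Rightarrow> real \<Rightarrow> real set" where
  "star_sums g X n z =
     {(\<Sum>j=1..n. g j (x j)) | x. (\<forall>j\<in>{1..n}. x j \<in> X j) \<and> (\<Sum>j=1..n. x j) = z}"

lemma star_eq_Sup_star_sums: "star g X n z = Sup (star_sums g X n z)"
  unfolding star_def star_sums_def ..

lemma star_sums_nonempty_iff: "star_sums g X n z \<noteq> {} \<longleftrightarrow> z \<in> minkowski_sum X n"
  unfolding star_sums_def minkowski_sum_def by auto

lemma star_sums_cong:
  assumes "\<And>j x. j \<in> {1..n} \<Longrightarrow> x \<in> X j \<Longrightarrow> g j x = h j x"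
  shows "star_sums g X n z = star_sums h X n z"
  unfolding star_sums_def using assms by (metis (no_types, lifting) sum.cong)

lemma star_eq_neg_l1_distance:
  assumes "\<And>j. j \<in> {1..n} \<Longrightarrow> is_interval (J j)" "\<forall>j\<in>{1..n}. c j \<in> closure (J j)"
    and "\<And>x. \<forall>j\<in>{1..n}. x j \<in> J j \<Longrightarrow> (\<Sum>j=1..n. f j (x j)) = h - (\<Sum>j=1..n. \<bar>x j - c j\<bar>)"
    and "z \<in> minkowski_sum J n"
  shows "bdd_above (star_sums f J n z) \<and> star f J n z = h - \<bar>z - (\<Sum>j=1..n. c j)\<bar>"
proof -
  let ?S = "star_sums f J n z"
  have upper: "s \<le> h - \<bar>z - (\<Sum>j=1..n. c j)\<bar>" if "s \<in> ?S" for s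
  proof -
    obtain x where x: "\<forall>j\<in>{1..n}. x j \<in> J j" "(\<Sum>j=1..n. x j) = z" "s = (\<Sum>j=1..n. f j (x j))"
      using \<open>s \<in> ?S\<close> unfolding star_sums_def by blast
    have "\<bar>z - (\<Sum>j=1..n. c j)\<bar> \<le> (\<Sum>j=1..n. \<bar>x j - c j\<bar>)"
      unfolding x(2)[symmetric] sum_subtractf[symmetric] by (rule sum_abs)
    then show ?thesis using assms(3)[OF x(1)] x(3) by simp
  qed
  have approached: "h - \<bar>z - (\<Sum>j=1..n. c j)\<bar> \<le> b" if "\<And>s. s \<in> ?S \<Longrightarrow> s \<le> b" for b
  proof (rule field_le_epsilon)
    fix e :: real assume "e > 0"
    then obtain x where x: "\<forall>j\<in>{1..n}. x j \<in> J j" "(\<Sum>j=1..n. x j) = z"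
      "(\<Sum>j=1..n. \<bar>x j - c j\<bar>) \<le> \<bar>z - (\<Sum>j=1..n. c j)\<bar> + e"
      using minkowski_sum_approach_closure[OF assms(1,2,4)] by blast
    then have "(\<Sum>j=1..n. f j (x j)) \<in> ?S" unfolding star_sums_def by blast
    then have "(\<Sum>j=1..n. f j (x j)) \<le> b" by (rule that)
    then show "h - \<bar>z - (\<Sum>j=1..n. c j)\<bar> \<le> b + e" using assms(3)[OF x(1)] x(3) by simp
  qed
  have "?S \<noteq> {}" using assms(4) star_sums_nonempty_iff by blast
  then have "Sup ?S = h - \<bar>z - (\<Sum>j=1..n. c j)\<bar>" using upper approached by (rule cSup_eq_non_empty)
  moreover have "bdd_above ?S" using upper by (rule bdd_aboveI)
  ultimately show ?thesis unfolding star_eq_Sup_star_sums by simp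
qed

text \<open>With \<open>c j\<close> the point of the closure of \<open>J j\<close> nearest to the top point of \<open>chi (t j)\<close>,
  the sum \<open>\<Sum> chi (t j) (x j)\<close> over the box is a constant minus the \<open>\<ell>\<^sub>1\<close>-distance of \<open>x\<close> to \<open>c\<close>.\<close>
lemma star_chi_on_intervals:
  assumes "\<And>j. j \<in> {1..n} \<Longrightarrow> is_interval (J j)"
  shows "\<exists>\<tau>. \<forall>z\<in>minkowski_sum J n.
    bdd_above (star_sums (\<lambda>j. chi (t j)) J n z) \<and> star (\<lambda>j. chi (t j)) J n z = chi \<tau> z"
proof (cases "minkowski_sum J n = {}")
  case False
  then have "J j \<noteq> {}" if "j \<in> {1..n}" for j
    using that unfolding minkowski_sum_def by auto
  then have "\<forall>j\<in>{1..n}. \<exists>c. c \<in> closure (J j) \<and>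
      (\<forall>y\<in>J j. \<bar>y - fst (t j)\<bar> = \<bar>y - c\<bar> + \<bar>c - fst (t j)\<bar>)"
    using interval_closure_point_between assms by metis
  then obtain c where c: "\<forall>j\<in>{1..n}. c j \<in> closure (J j)"
    "\<And>j y. j \<in> {1..n} \<Longrightarrow> y \<in> J j \<Longrightarrow> \<bar>y - fst (t j)\<bar> = \<bar>y - c j\<bar> + \<bar>c j - fst (t j)\<bar>"
    by metis
  define h where "h = (\<Sum>j=1..n. snd (t j) - \<bar>c j - fst (t j)\<bar>)"
  have "(\<Sum>j=1..n. chi (t j) (x j)) = h - (\<Sum>j=1..n. \<bar>x j - c j\<bar>)"
    if "\<forall>j\<in>{1..n}. x j \<in> J j" for x
  proof -
    have "(\<Sum>j=1..n. chi (t j) (x j)) = (\<Sum>j=1..n. (snd (t j) - \<bar>c j - fst (t j)\<bar>) - \<bar>x j - c j\<bar>)"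
      using that c(2) by (intro sum.cong) (auto simp: chi_eq_abs)
    then show ?thesis unfolding h_def by (simp add: sum_subtractf)
  qed
  then have "\<forall>z\<in>minkowski_sum J n. bdd_above (star_sums (\<lambda>j. chi (t j)) J n z) \<and>
      star (\<lambda>j. chi (t j)) J n z = chi ((\<Sum>j=1..n. c j), h) z"
    using star_eq_neg_l1_distance[OF assms c(1)] by (simp add: chi_eq_abs)
  then show ?thesis by blast
qed simp

lemma star_sums_cover:
  assumes "\<forall>\<sigma>\<in>K. \<forall>j\<in>{1..n}. \<sigma> j \<subseteq> X j"
    and "\<And>x. \<forall>j\<in>{1..n}. x j \<in> X j \<Longrightarrow> \<exists>\<sigma>\<in>K. \<forall>j\<in>{1..n}. x j \<in> \<sigma> j"
  shows "star_sums g X n z = (\<Union>\<sigma>\<in>K. star_sums g \<sigma> n z)"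
proof (intro equalityI subsetI)
  fix s assume "s \<in> star_sums g X n z"
  then obtain x where x: "\<forall>j\<in>{1..n}. x j \<in> X j" "(\<Sum>j=1..n. x j) = z" "s = (\<Sum>j=1..n. g j (x j))"
    unfolding star_sums_def by blast
  obtain \<sigma> where "\<sigma> \<in> K" "\<forall>j\<in>{1..n}. x j \<in> \<sigma> j" using assms(2)[OF x(1)] by blast
  then show "s \<in> (\<Union>\<sigma>\<in>K. star_sums g \<sigma> n z)" using x(2,3) unfolding star_sums_def by blast
next
  fix s assume "s \<in> (\<Union>\<sigma>\<in>K. star_sums g \<sigma> n z)"
  then obtain \<sigma> x where "\<sigma> \<in> K" "\<forall>j\<in>{1..n}. x j \<in> \<sigma> j" "(\<Sum>j=1..n. x j) = z"
    "s = (\<Sum>j=1..n. g j (x j))"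
    unfolding star_sums_def by blast
  then show "s \<in> star_sums g X n z" using assms(1) unfolding star_sums_def by blast
qed

lemma minkowski_sum_cover:
  assumes "\<forall>\<sigma>\<in>K. \<forall>j\<in>{1..n}. \<sigma> j \<subseteq> X j"
    and "\<And>x. \<forall>j\<in>{1..n}. x j \<in> X j \<Longrightarrow> \<exists>\<sigma>\<in>K. \<forall>j\<in>{1..n}. x j \<in> \<sigma> j"
  shows "minkowski_sum X n = (\<Union>\<sigma>\<in>K. minkowski_sum \<sigma> n)"
proof -
  have "z \<in> minkowski_sum X n \<longleftrightarrow> (\<exists>\<sigma>\<in>K. z \<in> minkowski_sum \<sigma> n)" for z
    unfolding star_sums_nonempty_iff[of "\<lambda>_. id", symmetric] by (simp add: star_sums_cover[OF assms])
  then show ?thesis by blast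
qed

lemma star_eq_Max_over_cover:
  assumes "finite K" "\<forall>\<sigma>\<in>K. \<forall>j\<in>{1..n}. \<sigma> j \<subseteq> X j"
    and "\<And>x. \<forall>j\<in>{1..n}. x j \<in> X j \<Longrightarrow> \<exists>\<sigma>\<in>K. \<forall>j\<in>{1..n}. x j \<in> \<sigma> j"
    and "\<forall>\<sigma>\<in>K. \<forall>z\<in>minkowski_sum \<sigma> n. bdd_above (star_sums g \<sigma> n z)"
    and "z \<in> minkowski_sum X n"
  shows "star g X n z = Max ((\<lambda>\<sigma>. star g \<sigma> n z) ` {\<sigma>\<in>K. z \<in> minkowski_sum \<sigma> n})"
proof -
  let ?K = "{\<sigma>\<in>K. z \<in> minkowski_sum \<sigma> n}"
  have in_domain: "z \<in> minkowski_sum \<sigma> n" if "s \<in> star_sums g \<sigma> n z" for s \<sigma>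
    using that star_sums_nonempty_iff[of g \<sigma> n z] by auto
  have "star_sums g X n z = (\<Union>\<sigma>\<in>K. star_sums g \<sigma> n z)"
    by (rule star_sums_cover[OF assms(2,3)])
  also have "\<dots> = (\<Union>\<sigma>\<in>?K. star_sums g \<sigma> n z)"
    using in_domain by auto
  finally have "star_sums g X n z = (\<Union>\<sigma>\<in>?K. star_sums g \<sigma> n z)" .
  moreover have "?K \<noteq> {}" using minkowski_sum_cover[OF assms(2,3)] assms(5) by blast
  moreover have "finite ?K" using assms(1) by simp
  ultimately have "star g X n z = Sup ((\<lambda>\<sigma>. star g \<sigma> n z) ` ?K)"
    using assms(4) cSUP_UNION[of ?K "\<lambda>\<sigma>. star_sums g \<sigma> n z" "\<lambda>s. s"] star_sums_nonempty_iff
    by (simp add: star_eq_Sup_star_sums)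
  then show ?thesis using \<open>finite ?K\<close> \<open>?K \<noteq> {}\<close> by (simp add: cSup_eq_Max)
qed

lemma piecewise_chi_star_of_interval_cover:
  assumes "finite K"
    and "\<forall>\<sigma>\<in>K. \<forall>j\<in>{1..n}. is_interval (\<sigma> j) \<and> \<sigma> j \<subseteq> X j \<and> (\<exists>\<tau>. \<forall>x\<in>\<sigma> j. g j x = chi \<tau> x)"
    and "\<And>x. \<forall>j\<in>{1..n}. x j \<in> X j \<Longrightarrow> \<exists>\<sigma>\<in>K. \<forall>j\<in>{1..n}. x j \<in> \<sigma> j"
  shows "piecewise_chi (star g X n) (minkowski_sum X n)"
proof -
  have "\<forall>\<sigma>\<in>K. \<exists>\<tau>. \<forall>z\<in>minkowski_sum \<sigma> n.
      bdd_above (star_sums g \<sigma> n z) \<and> star g \<sigma> n z = chi \<tau> z"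
  proof
    fix \<sigma> assume \<sigma>: "\<sigma> \<in> K"
    then have "\<forall>j\<in>{1..n}. \<exists>\<tau>. \<forall>x\<in>\<sigma> j. g j x = chi \<tau> x" using assms(2) by blast
    from bchoice[OF this] obtain t where "\<forall>j\<in>{1..n}. \<forall>x\<in>\<sigma> j. g j x = chi (t j) x"
      by blast
    then have "star_sums g \<sigma> n z = star_sums (\<lambda>j. chi (t j)) \<sigma> n z" for z
      by (intro star_sums_cong) auto
    then show "\<exists>\<tau>. \<forall>z\<in>minkowski_sum \<sigma> n. bdd_above (star_sums g \<sigma> n z) \<and> star g \<sigma> n z = chi \<tau> z"
      using star_chi_on_intervals[of n \<sigma> t] assms(2) \<sigma> by (simp add: star_eq_Sup_star_sums)
  qed
  from bchoice[OF this] obtain T where T: "\<forall>\<sigma>\<in>K. \<forall>z\<in>minkowski_sum \<sigma> n.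
      bdd_above (star_sums g \<sigma> n z) \<and> star g \<sigma> n z = chi (T \<sigma>) z"
    by blast
  let ?E = "\<lambda>z. Max ((\<lambda>\<sigma>. chi (T \<sigma>) z) ` {\<sigma>\<in>K. z \<in> minkowski_sum \<sigma> n})"
  have subsets: "\<forall>\<sigma>\<in>K. \<forall>j\<in>{1..n}. \<sigma> j \<subseteq> X j" using assms(2) by blast
  have star_eq: "star g X n z = ?E z" if "z \<in> minkowski_sum X n" for z
  proof -
    have "star g X n z = Max ((\<lambda>\<sigma>. star g \<sigma> n z) ` {\<sigma>\<in>K. z \<in> minkowski_sum \<sigma> n})"
      using T by (intro star_eq_Max_over_cover[OF assms(1) subsets assms(3) _ that]) auto
    also have "(\<lambda>\<sigma>. star g \<sigma> n z) ` {\<sigma>\<in>K. z \<in> minkowski_sum \<sigma> n} =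
        (\<lambda>\<sigma>. chi (T \<sigma>) z) ` {\<sigma>\<in>K. z \<in> minkowski_sum \<sigma> n}"
      using T by (intro image_cong) auto
    finally show ?thesis .
  qed
  have "piecewise_chi ?E (\<Union>\<sigma>\<in>K. minkowski_sum \<sigma> n)"
    using assms(1,2) by (intro piecewise_chi_Max is_interval_minkowski_sum) auto
  then have "piecewise_chi ?E (minkowski_sum X n)"
    using minkowski_sum_cover[OF subsets assms(3)] by simp
  then show ?thesis by (rule piecewise_chi_cong) (simp add: star_eq)
qed

lemma PiE_select_containing:
  assumes "\<forall>j\<in>I. x j \<in> \<Union>(\<A> j)"
  shows "\<exists>\<sigma>\<in>PiE I \<A>. \<forall>j\<in>I. x j \<in> \<sigma> j"
proof -
  let ?pick = "\<lambda>j. SOME A. A \<in> \<A> j \<and> x j \<in> A"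
  have "?pick j \<in> \<A> j \<and> x j \<in> ?pick j" if "j \<in> I" for j
  proof (rule someI_ex)
    show "\<exists>A. A \<in> \<A> j \<and> x j \<in> A" using assms that by blast
  qed
  then show ?thesis by (intro bexI[of _ "restrict ?pick I"]) auto
qed

lemma piecewise_chi_star_of_interval_pieces:
  assumes "\<And>j. j \<in> {1..n} \<Longrightarrow> \<exists>\<I>. finite \<I> \<and> \<Union>\<I> = X j \<and>
      (\<forall>J\<in>\<I>. is_interval J \<and> (\<exists>\<tau>. \<forall>x\<in>J. g j x = chi \<tau> x))"
  shows "piecewise_chi (star g X n) (minkowski_sum X n)"
proof -
  have "\<forall>j\<in>{1..n}. \<exists>\<I>. finite \<I> \<and> \<Union>\<I> = X j \<and>
      (\<forall>J\<in>\<I>. is_interval J \<and> (\<exists>\<tau>. \<forall>x\<in>J. g j x = chi \<tau> x))"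
    using assms by blast
  from bchoice[OF this] obtain \<I> where pieces: "\<forall>j\<in>{1..n}. finite (\<I> j) \<and> \<Union>(\<I> j) = X j \<and>
      (\<forall>J\<in>\<I> j. is_interval J \<and> (\<exists>\<tau>. \<forall>x\<in>J. g j x = chi \<tau> x))"
    by blast
  show ?thesis
  proof (rule piecewise_chi_star_of_interval_cover[where K = "PiE {1..n} \<I>"])
    show "finite (PiE {1..n} \<I>)" using pieces by (intro finite_PiE) auto
    show "\<forall>\<sigma>\<in>PiE {1..n} \<I>. \<forall>j\<in>{1..n}. is_interval (\<sigma> j) \<and> \<sigma> j \<subseteq> X j \<and>
        (\<exists>\<tau>. \<forall>x\<in>\<sigma> j. g j x = chi \<tau> x)"
    proof (intro ballI)
      fix \<sigma> j assume "\<sigma> \<in> PiE {1..n} \<I>" "j \<in> {1..n}"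
      then have "\<sigma> j \<in> \<I> j" by blast
      then show "is_interval (\<sigma> j) \<and> \<sigma> j \<subseteq> X j \<and> (\<exists>\<tau>. \<forall>x\<in>\<sigma> j. g j x = chi \<tau> x)"
        using pieces \<open>j \<in> {1..n}\<close> by blast
    qed
    show "\<exists>\<sigma>\<in>PiE {1..n} \<I>. \<forall>j\<in>{1..n}. x j \<in> \<sigma> j" if "\<forall>j\<in>{1..n}. x j \<in> X j" for x
      using that pieces by (intro PiE_select_containing) auto
  qed
qed

theorem proposition2:
  fixes n :: nat and X :: "nat \<Rightarrow> real set" and g :: "nat \<Rightarrow> real \<Rightarrow> real"
  assumes "\<And>j. j \<in> {1..n} \<Longrightarrow> finite_closed_interval_union (X j)"
    and "\<And>j. j \<in> {1..n} \<Longrightarrow> piecewise_chi (g j) (X j)"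
  shows "piecewise_chi (star g X n) (minkowski_sum X n)"
proof (rule piecewise_chi_star_of_interval_pieces)
  fix j assume "j \<in> {1..n}"
  from assms(2)[OF this] obtain \<I> where "finite \<I>" "\<Union>\<I> = X j"
    "\<forall>J\<in>\<I>. is_interval J \<and> (\<exists>\<tau>. \<forall>x\<in>J. g j x = chi \<tau> x)"
    unfolding piecewise_chi_def by blast
  then show "\<exists>\<I>. finite \<I> \<and> \<Union>\<I> = X j \<and>
      (\<forall>J\<in>\<I>. is_interval J \<and> (\<exists>\<tau>. \<forall>x\<in>J. g j x = chi \<tau> x))" by blast
qed

end
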